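(* Let $\theta,\alpha\in(0,\pi/2)$ with $\theta\ne\pi/4$. For $b\in\mathrm{Im}\,\mathbb{H}$ and $c\in\mathbb{H}$ set $$V=\begin{bmatrix}-b\cos^2\alpha\cos\theta\sin\theta\\ b\cos\alpha\sin\alpha\cos\theta\end{bmatrix},\qquad W=\begin{bmatrix}\bar c\sin\alpha\sin^2\theta+c\sin\alpha\cos^2\theta\\ \bar c\cos\alpha\sin\theta\end{bmatrix}.$$ If there exist non-zero $b\in\mathrm{Im}\,\mathbb{H}$ and $c\in\mathbb{H}$ with $V=W$, then $\tan^2\alpha=\dfrac{\sin^2\theta}{\cos^2\theta-\sin^2\theta}$.
   Context: $\mathbb{H}$ denotes the quaternions and $\mathrm{Im}\,\mathbb{H}$ the purely imaginary quaternions; $\bar c$ is quaternionic conjugation. *)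

theory Defs
  imports Complex_Main
begin

text \<open>Quaternions H, represented by their four real coordinates q = a + b i + c j + d k.
  Only the real vector space operations and conjugation are needed.\<close>

datatype quat = Quat (qre: real) (qi: real) (qj: real) (qk: real)

definition quat_zero :: quat where
  "quat_zero = Quat 0 0 0 0"

definition quat_add :: "quat \<Rightarrow> quat \<Rightarrow> quat" where
  "quat_add p q = Quat (qre p + qre q) (qi p + qi q) (qj p + qj q) (qk p + qk q)"

definition quat_scale :: "real \<Rightarrow> quat \<Rightarrow> quat" where
  "quat_scale r q = Quat (r * qre q) (r * qi q) (r * qj q) (r * qk q)"

definition quat_neg :: "quat \<Rightarrow> quat" where
  "quat_neg q = Quat (- qre q) (- qi q) (- qj q) (- qk q)"

definition quat_cnj :: "quat \<Rightarrow> quat" where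
  "quat_cnj q = Quat (qre q) (- qi q) (- qj q) (- qk q)"

definition quat_imag :: "quat set" where
  "quat_imag = {q. qre q = 0}"

end

theory Submission
  imports Defs
begin

text \<open>Only the imaginary parts of the two quaternionic equations matter. On each imaginary
  coordinate, conjugation is negation, so the system becomes the real linear system
  \<open>-cos\<^sup>2\<alpha> cos\<theta> sin\<theta> u = sin\<alpha> (cos\<^sup>2\<theta> - sin\<^sup>2\<theta>) v\<close> and
  \<open>sin\<alpha> cos\<theta> u = - sin\<theta> v\<close> in a coordinate \<open>u\<close> of \<open>b\<close> and the matching coordinate \<open>v\<close>
  of \<open>c\<close>. Eliminating \<open>v\<close> and cancelling \<open>u \<noteq> 0\<close> gives
  \<open>cos\<^sup>2\<alpha> sin\<^sup>2\<theta> = sin\<^sup>2\<alpha> (cos\<^sup>2\<theta> - sin\<^sup>2\<theta>)\<close>, which is the claim divided by \<open>cos\<^sup>2\<alpha>\<close>.\<close>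

lemma imag_coord_quat_ops:
  assumes "f \<in> {qi, qj, qk}"
  shows "f (quat_scale r q) = r * f q" "f (quat_add p q) = f p + f q"
    and "f (quat_neg q) = - f q" "f (quat_cnj q) = - f q"
  using assms
  by (auto simp: quat_scale_def quat_add_def quat_neg_def quat_cnj_def)

lemma quat_imag_nonzero_coord:
  assumes "b \<in> quat_imag" "b \<noteq> quat_zero"
  obtains f where "f \<in> {qi, qj, qk}" "f b \<noteq> 0"
proof -
  have "qi b \<noteq> 0 \<or> qj b \<noteq> 0 \<or> qk b \<noteq> 0"
    using assms by (cases b) (auto simp: quat_imag_def quat_zero_def)
  then show ?thesis
    using that by blast
qed

lemma angle_relation_of_linear_system:
  fixes ca sa ct st u v :: real
  assumes "ca \<noteq> 0" "ct \<noteq> 0" "u \<noteq> 0"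
    and eq1: "ca\<^sup>2 * ct * st * (- u) = sa * st\<^sup>2 * (- v) + sa * ct\<^sup>2 * v"
    and eq2: "ca * sa * ct * u = ca * st * (- v)"
  shows "ca\<^sup>2 * st\<^sup>2 = sa\<^sup>2 * (ct\<^sup>2 - st\<^sup>2)"
proof -
  have "ca * (st * v) = ca * (- sa * ct * u)"
    using eq2 by (simp add: algebra_simps)
  then have v: "st * v = - sa * ct * u"
    using \<open>ca \<noteq> 0\<close> mult_left_cancel by blast
  have "st * (ca\<^sup>2 * ct * st * (- u)) = st * (sa * st\<^sup>2 * (- v) + sa * ct\<^sup>2 * v)"
    using eq1 by simp
  also have "\<dots> = sa * (ct\<^sup>2 - st\<^sup>2) * (st * v)"
    by (simp add: algebra_simps)
  also have "\<dots> = - sa\<^sup>2 * ct * (ct\<^sup>2 - st\<^sup>2) * u"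
    using v by (simp add: power2_eq_square algebra_simps)
  finally have "(ct * u) * (ca\<^sup>2 * st\<^sup>2) = (ct * u) * (sa\<^sup>2 * (ct\<^sup>2 - st\<^sup>2))"
    by (simp add: power2_eq_square algebra_simps)
  then show ?thesis
    using assms by simp
qed

lemma angle_relation_of_quat_system:
  fixes ca sa ct st :: real
  assumes "ca \<noteq> 0" "ct \<noteq> 0" "b \<in> quat_imag" "b \<noteq> quat_zero"
    and eq1: "quat_scale (ca\<^sup>2 * ct * st) (quat_neg b) =
      quat_add (quat_scale (sa * st\<^sup>2) (quat_cnj c)) (quat_scale (sa * ct\<^sup>2) c)"
    and eq2: "quat_scale (ca * sa * ct) b = quat_scale (ca * st) (quat_cnj c)"
  shows "ca\<^sup>2 * st\<^sup>2 = sa\<^sup>2 * (ct\<^sup>2 - st\<^sup>2)"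
proof -
  obtain f where f: "f \<in> {qi, qj, qk}" "f b \<noteq> 0"
    using quat_imag_nonzero_coord assms(3,4) by blast
  have "ca\<^sup>2 * ct * st * (- f b) = sa * st\<^sup>2 * (- f c) + sa * ct\<^sup>2 * f c"
    using arg_cong[OF eq1, of f] by (simp add: imag_coord_quat_ops[OF f(1)])
  moreover have "ca * sa * ct * f b = ca * st * (- f c)"
    using arg_cong[OF eq2, of f] by (simp add: imag_coord_quat_ops[OF f(1)])
  ultimately show ?thesis
    using angle_relation_of_linear_system assms(1,2) f(2) by blast
qed

lemma tan_square_of_angle_relation:
  assumes "cos \<alpha> \<noteq> 0" "sin \<theta> \<noteq> 0"
    and rel: "(cos \<alpha>)\<^sup>2 * (sin \<theta>)\<^sup>2 = (sin \<alpha>)\<^sup>2 * ((cos \<theta>)\<^sup>2 - (sin \<theta>)\<^sup>2)"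
  shows "(tan \<alpha>)\<^sup>2 = (sin \<theta>)\<^sup>2 / ((cos \<theta>)\<^sup>2 - (sin \<theta>)\<^sup>2)"
proof -
  have "(cos \<theta>)\<^sup>2 - (sin \<theta>)\<^sup>2 \<noteq> 0"
    using assms by auto
  then show ?thesis
    using rel \<open>cos \<alpha> \<noteq> 0\<close> by (simp add: tan_def power_divide field_simps)
qed

theorem proposition3p2:
  fixes \<theta> \<alpha> :: real
  assumes "0 < \<theta>" "\<theta> < pi / 2" "0 < \<alpha>" "\<alpha> < pi / 2" "\<theta> \<noteq> pi / 4"
    and "\<exists>b c. b \<in> quat_imag \<and> b \<noteq> quat_zero \<and> c \<noteq> quat_zero \<and>
           quat_scale ((cos \<alpha>)\<^sup>2 * cos \<theta> * sin \<theta>) (quat_neg b) =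
             quat_add (quat_scale (sin \<alpha> * (sin \<theta>)\<^sup>2) (quat_cnj c))
                      (quat_scale (sin \<alpha> * (cos \<theta>)\<^sup>2) c) \<and>
           quat_scale (cos \<alpha> * sin \<alpha> * cos \<theta>) b =
             quat_scale (cos \<alpha> * sin \<theta>) (quat_cnj c)"
  shows "(tan \<alpha>)\<^sup>2 = (sin \<theta>)\<^sup>2 / ((cos \<theta>)\<^sup>2 - (sin \<theta>)\<^sup>2)"
proof -
  have cos_\<alpha>: "cos \<alpha> \<noteq> 0" and cos_\<theta>: "cos \<theta> \<noteq> 0"
    using assms cos_gt_zero_pi[of \<alpha>] cos_gt_zero_pi[of \<theta>] by auto
  have sin_\<theta>: "sin \<theta> \<noteq> 0"
    using assms sin_gt_zero[of \<theta>] by auto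
  obtain b c where b: "b \<in> quat_imag" "b \<noteq> quat_zero"
    and eq1: "quat_scale ((cos \<alpha>)\<^sup>2 * cos \<theta> * sin \<theta>) (quat_neg b) =
      quat_add (quat_scale (sin \<alpha> * (sin \<theta>)\<^sup>2) (quat_cnj c))
               (quat_scale (sin \<alpha> * (cos \<theta>)\<^sup>2) c)"
    and eq2: "quat_scale (cos \<alpha> * sin \<alpha> * cos \<theta>) b = quat_scale (cos \<alpha> * sin \<theta>) (quat_cnj c)"
    using assms(6) by blast
  have "(cos \<alpha>)\<^sup>2 * (sin \<theta>)\<^sup>2 = (sin \<alpha>)\<^sup>2 * ((cos \<theta>)\<^sup>2 - (sin \<theta>)\<^sup>2)"
    by (rule angle_relation_of_quat_system[OF cos_\<alpha> cos_\<theta> b eq1 eq2])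
  then show ?thesis
    by (rule tan_square_of_angle_relation[OF cos_\<alpha> sin_\<theta>])
qed

end
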